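(* Let $\mathcal X=\{\vec x^{(1)},\dots,\vec x^{(M)}\}\subset\mathbb{R}^d$. Let $U\subseteq\mathcal P([d])$, for each $\vec w\in U$ let $\mathcal I_{\vec w}$ be a finite set of frequency vectors $\vec\omega\in\mathbb{R}^d$ with $\operatorname{supp}\vec\omega=\vec w$, and let $a^\#_{\vec\omega}\in\mathbb{C}$ be coefficients. Fix $\vec u\in U$ such that no $\vec v\in U$ satisfies $\vec u\subsetneq\vec v$, and set $g(\vec x_{\vec u})=\sum_{\vec\omega\in\mathcal I_{\vec u}}a^\#_{\vec\omega}\mathrm{e}^{\mathrm{i}\langle\vec\omega_{\vec u},\vec x_{\vec u}\rangle}$. Define Monte-Carlo ANOVA terms of $g$ recursively by $$g^{\mathrm{MC}}_\varnothing=\frac1M\sum_{j=1}^M g(\vec x^{(j)}_{\vec u}),\qquad g^{\mathrm{MC}}_{\vec v}(\vec x_{\vec v})=\frac1M\sum_{j=1}^M g\big(\vec x_{\vec v},\vec x^{(j)}_{\vec u\setminus\vec v}\big)-\sum_{\vec v'\subsetneq\vec v}g^{\mathrm{MC}}_{\vec v'}(\vec x_{\vec v'})\quad(\varnothing\neq\vec v\subseteq\vec u).$$ Then $g^{\mathrm{MC}}_\varnothing=\frac1M\sum_{\vec\omega\in\mathcal I_{\vec u}}a^\#_{\vec\omega}\sum_{j=1}^M\mathrm{e}^{\mathrm{i}\langle\vec x^{(j)},\vec\omega\rangle}$ and, for every $\vec v\subseteq\vec u$, $$g^{\mathrm{MC}}_{\vec v}(\vec x_{\vec v})=\frac1M\sum_{\vec\omega\in\mathcal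 I_{\vec u}}a^\#_{\vec\omega}\sum_{j=1}^M\mathrm{e}^{\mathrm{i}\langle\vec x^{(j)}_{\vec u\setminus\vec v},\vec\omega_{\vec u\setminus\vec v}\rangle}\prod_{i\in\vec v}\left(\mathrm{e}^{\mathrm{i}x_i\omega_i}-\mathrm{e}^{\mathrm{i}x^{(j)}_i\omega_i}\right).$$
   Context: $[d]=\{1,\dots,d\}$, $\mathcal P([d])$ its power set, $\vec x_{\vec v}=(x_i)_{i\in\vec v}$; $g(\vec x_{\vec v},\vec x^{(j)}_{\vec u\setminus\vec v})$ means $g$ evaluated at the point whose coordinates in $\vec v$ are those of $\vec x$ and whose coordinates in $\vec u\setminus\vec v$ are those of $\vec x^{(j)}$. *)

theory Defs
  imports "HOL-Analysis.Analysis"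
begin

definition mixpt :: "'d set \<Rightarrow> real^'d \<Rightarrow> real^'d \<Rightarrow> real^'d" where
  "mixpt v x y = (\<chi> i. if i \<in> v then x $ i else y $ i)"

function anova_mc :: "(real^'d::finite \<Rightarrow> complex) \<Rightarrow> nat \<Rightarrow> (nat \<Rightarrow> real^'d) \<Rightarrow> 'd set \<Rightarrow> real^'d \<Rightarrow> complex" where
  "anova_mc g M X v x =
     (1 / of_nat M) * (\<Sum>j=1..M. g (mixpt v x (X j)))
     - (\<Sum>v'\<in>{v'. v' \<subset> v}. anova_mc g M X v' x)"
  by pat_completeness auto
termination
  by (relation "Wellfounded.measure (\<lambda>(g, M, X, v, x). card v)")
     (auto intro: psubset_card_mono)

end

theory Submission
  imports Defs
begin

text \<open>Write \<open>G v x\<close> for the claimed closed form. Summed over all subsets w of v, it gives the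
  Monte-Carlo average of g at the points that agree with x on v and with the samples elsewhere:
  for a single frequency this is the expansion of
  \<open>\<Prod>i\<in>v. exp (\<i> x\<^sub>i \<omega>\<^sub>i) = \<Prod>i\<in>v. ((exp (\<i> x\<^sub>i \<omega>\<^sub>i) - exp (\<i> X\<^sub>j\<^sub>i \<omega>\<^sub>i)) + exp (\<i> X\<^sub>j\<^sub>i \<omega>\<^sub>i))\<close>
  over the subsets of v. So G satisfies the recursion defining the ANOVA terms, which has only
  one solution, by induction over strict subsets. For \<open>v = {}\<close> the inner sum becomes the
  full inner product because the frequencies in \<open>I u\<close> vanish outside u.\<close>

declare anova_mc.simps[simp del]

lemma anova_mc_eq_if_sum_Pow:
  fixes G :: "'d::finite set \<Rightarrow> complex"
  assumes G_sum: "\<And>v. v \<subseteq> u \<Longrightarrow>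
      (\<Sum>w\<in>Pow v. G w) = (1 / of_nat M) * (\<Sum>j=1..M. g (mixpt v x (X j)))"
    and "v \<subseteq> u"
  shows "anova_mc g M X v x = G v"
  using finite[of v] \<open>v \<subseteq> u\<close>
proof (induction v rule: finite_psubset_induct)
  case (psubset v)
  have IH: "anova_mc g M X v' x = G v'" if "v' \<subset> v" for v'
    using psubset that by blast
  have Pow_v: "Pow v = insert v {v'. v' \<subset> v}" by auto
  have "anova_mc g M X v x = (\<Sum>w\<in>Pow v. G w) - (\<Sum>v'\<in>{v'. v' \<subset> v}. anova_mc g M X v' x)"
    by (subst anova_mc.simps) (simp add: G_sum psubset.prems)
  also have "\<dots> = G v"
    unfolding Pow_v by (subst sum.insert) (auto simp: IH)
  finally show ?case .
qed

lemma sum_Pow_prod_diff: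
  fixes A B :: "'a \<Rightarrow> 'b::comm_ring_1"
  assumes "finite u" "v \<subseteq> u"
  shows "(\<Sum>w\<in>Pow v. (\<Prod>i\<in>u - w. B i) * (\<Prod>i\<in>w. A i - B i)) = (\<Prod>i\<in>u - v. B i) * (\<Prod>i\<in>v. A i)"
proof -
  have fin_v: "finite v" using assms finite_subset by blast
  have split: "(\<Prod>i\<in>u - w. B i) = (\<Prod>i\<in>u - v. B i) * (\<Prod>i\<in>v - w. B i)" if "w \<subseteq> v" for w
  proof -
    have "u - w = (u - v) \<union> (v - w)" using that assms by auto
    moreover have "(u - v) \<inter> (v - w) = {}" by blast
    ultimately show ?thesis using assms fin_v by (simp add: prod.union_disjoint)
  qed
  have "(\<Prod>i\<in>v. A i) = (\<Prod>i\<in>v. (A i - B i) + B i)" by simp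
  also have "\<dots> = (\<Sum>w\<in>Pow v. (\<Prod>i\<in>w. A i - B i) * (\<Prod>i\<in>v - w. B i))"
    by (rule prod_add[OF fin_v])
  finally have expand: "(\<Prod>i\<in>v. A i) = (\<Sum>w\<in>Pow v. (\<Prod>i\<in>w. A i - B i) * (\<Prod>i\<in>v - w. B i))" .
  show ?thesis
    unfolding expand sum_distrib_left
  proof (rule sum.cong)
    fix w assume "w \<in> Pow v"
    then have "w \<subseteq> v" by simp
    then show "(\<Prod>i\<in>u - w. B i) * (\<Prod>i\<in>w. A i - B i) =
        (\<Prod>i\<in>u - v. B i) * ((\<Prod>i\<in>w. A i - B i) * (\<Prod>i\<in>v - w. B i))"
      by (simp only: split[OF \<open>w \<subseteq> v\<close>] mult_ac)
  qed simp
qed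

lemma exp_i_sum:
  "finite S \<Longrightarrow> exp (\<i> * complex_of_real (\<Sum>i\<in>S. f i)) = (\<Prod>i\<in>S. exp (\<i> * complex_of_real (f i)))"
  by (simp add: sum_distrib_left exp_sum)

lemma exp_i_sum_mixpt:
  fixes \<omega> x y :: "real^'d::finite"
  assumes "v \<subseteq> u"
  shows "exp (\<i> * complex_of_real (\<Sum>i\<in>u. \<omega> $ i * mixpt v x y $ i)) =
    (\<Prod>i\<in>u - v. exp (\<i> * complex_of_real (y $ i * \<omega> $ i))) *
    (\<Prod>i\<in>v. exp (\<i> * complex_of_real (x $ i * \<omega> $ i)))"
  (is "?lhs = ?rhs")
proof -
  have "?lhs = (\<Prod>i\<in>u. exp (\<i> * complex_of_real (\<omega> $ i * mixpt v x y $ i)))"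
    by (rule exp_i_sum) simp
  also have "\<dots> =
      (\<Prod>i\<in>u - v. exp (\<i> * complex_of_real (\<omega> $ i * mixpt v x y $ i))) *
      (\<Prod>i\<in>v. exp (\<i> * complex_of_real (\<omega> $ i * mixpt v x y $ i)))"
    by (rule prod.subset_diff[OF assms finite])
  also have "\<dots> = ?rhs"
    by (auto simp: mixpt_def mult.commute intro!: arg_cong2[where f = "(*)"] prod.cong)
  finally show ?thesis .
qed

lemma sum_Pow_exp_i_mixpt:
  fixes \<omega> x y :: "real^'d::finite"
  assumes "v \<subseteq> u"
  shows "(\<Sum>w\<in>Pow v. exp (\<i> * complex_of_real (\<Sum>i\<in>u - w. y $ i * \<omega> $ i)) *
      (\<Prod>i\<in>w. exp (\<i> * complex_of_real (x $ i * \<omega> $ i))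
               - exp (\<i> * complex_of_real (y $ i * \<omega> $ i)))) =
    exp (\<i> * complex_of_real (\<Sum>i\<in>u. \<omega> $ i * mixpt v x y $ i))"
  (is "?lhs = ?rhs")
proof -
  have "?lhs = (\<Prod>i\<in>u - v. exp (\<i> * complex_of_real (y $ i * \<omega> $ i))) *
      (\<Prod>i\<in>v. exp (\<i> * complex_of_real (x $ i * \<omega> $ i)))"
    using sum_Pow_prod_diff[OF finite assms,
        where A = "\<lambda>i. exp (\<i> * complex_of_real (x $ i * \<omega> $ i))"
          and B = "\<lambda>i. exp (\<i> * complex_of_real (y $ i * \<omega> $ i))"]
    by (simp only: exp_i_sum[OF finite])
  also have "\<dots> = ?rhs"
    by (rule exp_i_sum_mixpt[OF assms, symmetric])
  finally show ?thesis .
qed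

lemma anova_mc_exp_sum:
  fixes F :: "(real^'d::finite) set" and a :: "real^'d \<Rightarrow> complex"
  assumes g_def: "g = (\<lambda>y. \<Sum>\<omega>\<in>F. a \<omega> * exp (\<i> * complex_of_real (\<Sum>i\<in>u. \<omega> $ i * y $ i)))"
    and "v \<subseteq> u"
  shows "anova_mc g M X v x =
    (1 / of_nat M) * (\<Sum>\<omega>\<in>F. a \<omega> *
      (\<Sum>j=1..M. exp (\<i> * complex_of_real (\<Sum>i\<in>u - v. X j $ i * \<omega> $ i)) *
         (\<Prod>i\<in>v. exp (\<i> * complex_of_real (x $ i * \<omega> $ i))
                  - exp (\<i> * complex_of_real (X j $ i * \<omega> $ i)))))"
    (is "_ = ?G v")
proof (rule anova_mc_eq_if_sum_Pow[OF _ \<open>v \<subseteq> u\<close>])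
  fix v assume "v \<subseteq> u"
  have "(\<Sum>w\<in>Pow v. ?G w) = (1 / of_nat M) * (\<Sum>\<omega>\<in>F. a \<omega> *
      (\<Sum>j=1..M. \<Sum>w\<in>Pow v. exp (\<i> * complex_of_real (\<Sum>i\<in>u - w. X j $ i * \<omega> $ i)) *
         (\<Prod>i\<in>w. exp (\<i> * complex_of_real (x $ i * \<omega> $ i))
                  - exp (\<i> * complex_of_real (X j $ i * \<omega> $ i)))))"
    unfolding sum_distrib_left[symmetric]
    by (simp add: sum_distrib_left sum.swap[of _ "Pow v"])
  also have "\<dots> = (1 / of_nat M) * (\<Sum>\<omega>\<in>F. a \<omega> *
      (\<Sum>j=1..M. exp (\<i> * complex_of_real (\<Sum>i\<in>u. \<omega> $ i * mixpt v x (X j) $ i))))"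
    by (simp only: sum_Pow_exp_i_mixpt[OF \<open>v \<subseteq> u\<close>])
  also have "\<dots> = (1 / of_nat M) * (\<Sum>j=1..M. g (mixpt v x (X j)))"
    by (simp add: g_def sum_distrib_left sum.swap[where A = F])
  finally show "(\<Sum>w\<in>Pow v. ?G w) = (1 / of_nat M) * (\<Sum>j=1..M. g (mixpt v x (X j)))" .
qed

lemma inner_vec_eq_sum_support:
  fixes x \<omega> :: "real^'d::finite"
  assumes "{i. \<omega> $ i \<noteq> 0} \<subseteq> u"
  shows "x \<bullet> \<omega> = (\<Sum>i\<in>u. x $ i * \<omega> $ i)"
  unfolding inner_vec_def inner_real_def using assms
  by (intro sum.mono_neutral_right) auto

theorem lemma5p1:
  fixes M :: nat
    and X :: "nat \<Rightarrow> real^'d::finite"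
    and U :: "'d set set"
    and I :: "'d set \<Rightarrow> (real^'d) set"
    and a :: "real^'d \<Rightarrow> complex"
    and u :: "'d set"
    and g :: "real^'d \<Rightarrow> complex"
  assumes M_pos: "M \<ge> 1"
    and I_finite: "\<forall>w\<in>U. finite (I w)"
    and I_supp: "\<forall>w\<in>U. \<forall>\<omega>\<in>I w. {i. \<omega> $ i \<noteq> 0} = w"
    and u_in: "u \<in> U"
    and u_max: "\<not> (\<exists>v\<in>U. u \<subset> v)"
    and g_def: "g = (\<lambda>y. \<Sum>\<omega>\<in>I u. a \<omega> * exp (\<i> * complex_of_real (\<Sum>i\<in>u. \<omega> $ i * y $ i)))"
  shows "anova_mc g M X {} x0 =
           (1 / of_nat M) * (\<Sum>\<omega>\<in>I u. a \<omega> *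
              (\<Sum>j=1..M. exp (\<i> * complex_of_real (X j \<bullet> \<omega>)))) \<and>
         (\<forall>v. v \<subseteq> u \<longrightarrow> (\<forall>x. anova_mc g M X v x =
           (1 / of_nat M) * (\<Sum>\<omega>\<in>I u. a \<omega> *
              (\<Sum>j=1..M. exp (\<i> * complex_of_real (\<Sum>i\<in>u - v. X j $ i * \<omega> $ i)) *
                 (\<Prod>i\<in>v. exp (\<i> * complex_of_real (x $ i * \<omega> $ i))
                          - exp (\<i> * complex_of_real (X j $ i * \<omega> $ i)))))))"
proof -
  have "X j \<bullet> \<omega> = (\<Sum>i\<in>u. X j $ i * \<omega> $ i)" if "\<omega> \<in> I u" for j \<omega>
    using I_supp u_in that by (intro inner_vec_eq_sum_support) auto
  then show ?thesis
    by (simp add: anova_mc_exp_sum[OF g_def])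
qed

end
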